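(* There exists a family of graphs $G$ on $n$ vertices (with $n\to\infty$) for which $\beta(G)=n/2$, $\alpha(G)=\frac25 n$, and $\beta_1(G)=(1-\frac15\log_2 5+o(1))n$. Moreover, $\beta^*(G)=(1-o(1))\beta_1(G)$.
   Context: For an undirected graph $G$ on vertex set $[n]$, consider the index coding problem: a server holds messages $x_1,\dots,x_n\in\Sigma$ ($|\Sigma|>1$), receiver $i$ wants $x_i$ and knows $x_j$ for every neighbor $j$ of $i$. A solution is an encoding $\mathcal{E}:\Sigma^n\to\Sigma_P$ from which each receiver can recover its message given its side information, for all message values. $\beta_t(G)$ is the minimum of $\lceil\log_2|\Sigma_P|\rceil$ over solutions with $|\Sigma|=2^t$; $\beta_1(G)$ is this quantity for $t=1$, and $\beta(G)=\lim_t\beta_t(G)/t=\inf_t\beta_t(G)/t$. For a positive integer $t$, $t\cdot G$ denotes the disjoint union of $t$ copies of $G$, and $\beta^*(G)=\lim_{t\to\infty}\frac1t\beta_1(t\cdot G)=\inf_t\frac1t\beta_1(t\cdot G)$. $\alpha(G)$ is the independence number. *)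

theory Defs
  imports Complex_Main
begin

definition is_graph :: "nat \<Rightarrow> (nat \<Rightarrow> nat \<Rightarrow> bool) \<Rightarrow> bool" where
  "is_graph n E \<longleftrightarrow> (\<forall>i j. E i j \<longrightarrow> i < n \<and> j < n \<and> i \<noteq> j \<and> E j i)"

definition msgs :: "nat \<Rightarrow> nat \<Rightarrow> (nat \<Rightarrow> nat) set" where
  "msgs n q = {x. (\<forall>i<n. x i < q) \<and> (\<forall>i\<ge>n. x i = 0)}"

definition is_solution ::
  "nat \<Rightarrow> (nat \<Rightarrow> nat \<Rightarrow> bool) \<Rightarrow> nat \<Rightarrow> ((nat \<Rightarrow> nat) \<Rightarrow> 'p) \<Rightarrow> bool" where
  "is_solution n E q enc \<longleftrightarrow>
     (\<forall>i<n. \<forall>x\<in>msgs n q. \<forall>y\<in>msgs n q.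
        enc x = enc y \<and> (\<forall>j<n. E i j \<longrightarrow> x j = y j) \<longrightarrow> x i = y i)"

text \<open>beta_t(G): minimum of ceil(log2 |Sigma_P|) over solutions with |Sigma| = 2^t;
 Sigma_P is taken to be the image of the encoding (codewords as naturals).\<close>

definition beta_t :: "nat \<Rightarrow> (nat \<Rightarrow> nat \<Rightarrow> bool) \<Rightarrow> nat \<Rightarrow> nat" where
  "beta_t n E t = (LEAST k. \<exists>enc :: (nat \<Rightarrow> nat) \<Rightarrow> nat.
      is_solution n E (2 ^ t) enc \<and> k = nat \<lceil>log 2 (real (card (enc ` msgs n (2 ^ t))))\<rceil>)"

abbreviation beta_1 :: "nat \<Rightarrow> (nat \<Rightarrow> nat \<Rightarrow> bool) \<Rightarrow> nat" where
  "beta_1 n E \<equiv> beta_t n E 1"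

definition beta :: "nat \<Rightarrow> (nat \<Rightarrow> nat \<Rightarrow> bool) \<Rightarrow> real" where
  "beta n E = (INF t\<in>{1..}. real (beta_t n E t) / real t)"

text \<open>t \<cdot> G: disjoint union of t copies of G; copy k occupies vertices k*n .. k*n+n-1.\<close>

definition copies_n :: "nat \<Rightarrow> nat \<Rightarrow> nat" where
  "copies_n t n = t * n"

definition copies_E :: "nat \<Rightarrow> nat \<Rightarrow> (nat \<Rightarrow> nat \<Rightarrow> bool) \<Rightarrow> nat \<Rightarrow> nat \<Rightarrow> bool" where
  "copies_E t n E u v \<longleftrightarrow> u < t * n \<and> v < t * n \<and> u div n = v div n \<and> E (u mod n) (v mod n)"

definition beta_star :: "nat \<Rightarrow> (nat \<Rightarrow> nat \<Rightarrow> bool) \<Rightarrow> real" where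
  "beta_star n E = (INF t\<in>{1..}. real (beta_1 (copies_n t n) (copies_E t n E)) / real t)"

definition alpha :: "nat \<Rightarrow> (nat \<Rightarrow> nat \<Rightarrow> bool) \<Rightarrow> nat" where
  "alpha n E = Max {card S | S. S \<subseteq> {0..<n} \<and> (\<forall>i\<in>S. \<forall>j\<in>S. \<not> E i j)}"

end

theory Submission
  imports Defs "HOL-Library.FuncSet" "HOL-Real_Asymp.Real_Asymp"
begin

text \<open>
  The graphs are disjoint unions of \<open>m\<close> five-cycles. Every fibre of an index code is a
  confusion-free set of message vectors (no receiver can tell two of them apart), and on the
  5-cycle with alphabet size \<open>q\<close> such a set has at most \<open>q^(5/2)\<close> elements: fixing the ends
  \<open>x\<^sub>0, x\<^sub>4\<close>, a word is determined both by \<open>x\<^sub>2\<close> and by \<open>(x\<^sub>1, x\<^sub>3)\<close>. The bound multiplies over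
  disjoint copies, so every code needs \<open>5mt/2\<close> bits for \<open>t\<close>-bit messages, which a two-bit
  scheme attains; hence \<open>\<beta> = n/2\<close>. For one-bit messages the bound is \<open>5^m\<close>, which an explicit
  set attains, giving \<open>\<beta>\<^sub>1 \<ge> m (5 - log 5)\<close>; conversely, covering all messages by a few
  random translates of the product of that set and sending the index of a suitable translate
  gives \<open>\<beta>\<^sub>1 \<le> m (5 - log 5) + O(log m)\<close>. Disjoint copies of the family stay in the family,
  so the lower bound also holds for \<open>\<beta>\<^sup>*\<close>.
\<close>

section \<open>Index codes and confusion-free sets\<close>

lemma msgs_eqI:
  assumes "x \<in> msgs n q" "y \<in> msgs n q" "\<And>i. i < n \<Longrightarrow> x i = y i"
  shows "x = y"
proof
  fix i show "x i = y i"
    using assms by (cases "i < n") (auto simp: msgs_def)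
qed

lemma bij_betw_msgs_PiE:
  "bij_betw (\<lambda>x. restrict x {..<n}) (msgs n q) (PiE {..<n} (\<lambda>_. {..<q}))"
proof (rule bij_betw_byWitness[where f' = "\<lambda>f i. if i < n then f i else 0"])
  show "\<forall>x\<in>msgs n q. (\<lambda>i. if i < n then restrict x {..<n} i else 0) = x"
    by (auto simp: msgs_def fun_eq_iff)
  show "\<forall>f\<in>PiE {..<n} (\<lambda>_. {..<q}). restrict (\<lambda>i. if i < n then f i else 0) {..<n} = f"
    by (auto simp: PiE_def extensional_def fun_eq_iff)
  show "(\<lambda>x. restrict x {..<n}) ` msgs n q \<subseteq> PiE {..<n} (\<lambda>_. {..<q})"
    unfolding msgs_def by (intro image_subsetI, subst restrict_PiE_iff) auto
  show "(\<lambda>f i. if i < n then f i else 0) ` PiE {..<n} (\<lambda>_. {..<q}) \<subseteq> msgs n q"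
    by (auto simp: msgs_def PiE_def Pi_def)
qed

lemma finite_msgs [simp]: "finite (msgs n q)"
  using bij_betw_finite[OF bij_betw_msgs_PiE] by (simp add: finite_PiE)

lemma card_msgs [simp]: "card (msgs n q) = q ^ n"
  using bij_betw_same_card[OF bij_betw_msgs_PiE] by (simp add: card_PiE)

lemma zero_in_msgs: "0 < q \<Longrightarrow> (\<lambda>_. 0) \<in> msgs n q"
  by (simp add: msgs_def)

lemma ex_optimal_solution:
  "\<exists>enc :: (nat \<Rightarrow> nat) \<Rightarrow> nat. is_solution n E (2 ^ t) enc
     \<and> beta_t n E t = nat \<lceil>log 2 (real (card (enc ` msgs n (2 ^ t))))\<rceil>"
proof -
  obtain f :: "(nat \<Rightarrow> nat) \<Rightarrow> nat" where "inj_on f (msgs n (2 ^ t))"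
    using finite_imp_inj_to_nat_seg[OF finite_msgs] by blast
  then have "is_solution n E (2 ^ t) f"
    unfolding is_solution_def by (metis inj_on_def)
  then have "\<exists>k. \<exists>enc :: (nat \<Rightarrow> nat) \<Rightarrow> nat. is_solution n E (2 ^ t) enc
     \<and> k = nat \<lceil>log 2 (real (card (enc ` msgs n (2 ^ t))))\<rceil>"
    by blast
  from LeastI_ex[OF this] show ?thesis
    unfolding beta_t_def by metis
qed

lemma card_codewords_pos:
  assumes "0 < q" shows "0 < card (enc ` msgs n q)"
  using zero_in_msgs[OF assms] by (auto simp: card_gt_0_iff)

lemma beta_t_lowerI:
  assumes "\<And>enc :: (nat \<Rightarrow> nat) \<Rightarrow> nat. is_solution n E (2 ^ t) enc
             \<Longrightarrow> L \<le> log 2 (card (enc ` msgs n (2 ^ t)))"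
  shows "L \<le> real (beta_t n E t)"
proof -
  obtain enc :: "(nat \<Rightarrow> nat) \<Rightarrow> nat" where "is_solution n E (2 ^ t) enc"
    and "beta_t n E t = nat \<lceil>log 2 (real (card (enc ` msgs n (2 ^ t))))\<rceil>"
    using ex_optimal_solution by blast
  with assms real_nat_ceiling_ge show ?thesis by (metis order.trans)
qed

lemma ex_solution_card_le_beta_t:
  "\<exists>enc :: (nat \<Rightarrow> nat) \<Rightarrow> nat. is_solution n E (2 ^ t) enc
     \<and> card (enc ` msgs n (2 ^ t)) \<le> 2 ^ beta_t n E t"
proof -
  obtain enc :: "(nat \<Rightarrow> nat) \<Rightarrow> nat" where sol: "is_solution n E (2 ^ t) enc"
    and b: "beta_t n E t = nat \<lceil>log 2 (real (card (enc ` msgs n (2 ^ t))))\<rceil>"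
    using ex_optimal_solution by blast
  let ?c = "card (enc ` msgs n (2 ^ t))"
  have c: "0 < ?c" by (rule card_codewords_pos) simp
  have "real ?c = 2 powr log 2 ?c" using c by simp
  also have "\<dots> \<le> 2 powr real (beta_t n E t)"
    unfolding b by (intro powr_mono real_nat_ceiling_ge) simp
  also have "\<dots> = real (2 ^ beta_t n E t)" by (simp add: powr_realpow)
  finally show ?thesis using sol of_nat_le_iff by blast
qed

lemma beta_t_le_of_solution:
  fixes enc :: "(nat \<Rightarrow> nat) \<Rightarrow> 'c"
  assumes sol: "is_solution n E (2 ^ t) enc" and card: "card (enc ` msgs n (2 ^ t)) \<le> 2 ^ K"
  shows "beta_t n E t \<le> K"
proof -
  obtain h :: "'c \<Rightarrow> nat" where h: "inj_on h (enc ` msgs n (2 ^ t))"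
    using finite_imp_inj_to_nat_seg[of "enc ` msgs n (2 ^ t)"] by auto
  have sol': "is_solution n E (2 ^ t) (h \<circ> enc)"
    using sol h unfolding is_solution_def inj_on_def by (metis comp_apply image_eqI)
  have eq: "card ((h \<circ> enc) ` msgs n (2 ^ t)) = card (enc ` msgs n (2 ^ t))"
    using card_image[OF h] by (simp add: image_comp)
  have c: "0 < card (enc ` msgs n (2 ^ t))" by (rule card_codewords_pos) simp
  have "log 2 (card (enc ` msgs n (2 ^ t))) \<le> log 2 (2 ^ K)"
    using card c by (subst log_le_cancel_iff) (simp_all del: of_nat_power add: of_nat_power[symmetric])
  then have "log 2 (card (enc ` msgs n (2 ^ t))) \<le> K" by (simp add: log_nat_power)
  moreover have "beta_t n E t \<le> nat \<lceil>log 2 (real (card ((h \<circ> enc) ` msgs n (2 ^ t))))\<rceil>"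
    unfolding beta_t_def by (rule Least_le) (use sol' in blast)
  ultimately show ?thesis unfolding eq by linarith
qed

lemma beta_le_beta_t: "0 < t \<Longrightarrow> beta n E \<le> real (beta_t n E t) / real t"
  unfolding beta_def by (rule cINF_lower) (auto intro: bdd_belowI2[where m = 0])

lemma beta_greatest: "(\<And>t. 0 < t \<Longrightarrow> L \<le> real (beta_t n E t) / real t) \<Longrightarrow> L \<le> beta n E"
  unfolding beta_def by (rule cINF_greatest) auto

lemma beta_star_le_beta_1_copies:
  "0 < t \<Longrightarrow> beta_star n E \<le> real (beta_1 (copies_n t n) (copies_E t n E)) / real t"
  unfolding beta_star_def by (rule cINF_lower) (auto intro: bdd_belowI2[where m = 0])

lemma beta_star_greatest:
  "(\<And>t. 0 < t \<Longrightarrow> L \<le> real (beta_1 (copies_n t n) (copies_E t n E)) / real t) \<Longrightarrow> L \<le> beta_star n E"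
  unfolding beta_star_def by (rule cINF_greatest) auto

text \<open>Confusion-free sets are the independent sets of the confusion graph; every fibre of a
  solution is one.\<close>

definition confusable :: "nat \<Rightarrow> (nat \<Rightarrow> nat \<Rightarrow> bool) \<Rightarrow> (nat \<Rightarrow> nat) \<Rightarrow> (nat \<Rightarrow> nat) \<Rightarrow> bool" where
  "confusable n E x y \<longleftrightarrow> (\<exists>i<n. (\<forall>j<n. E i j \<longrightarrow> x j = y j) \<and> x i \<noteq> y i)"

definition confusion_free :: "nat \<Rightarrow> (nat \<Rightarrow> nat \<Rightarrow> bool) \<Rightarrow> nat \<Rightarrow> (nat \<Rightarrow> nat) set \<Rightarrow> bool" where
  "confusion_free n E q S \<longleftrightarrow> S \<subseteq> msgs n q \<and> (\<forall>x\<in>S. \<forall>y\<in>S. \<not> confusable n E x y)"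

lemma is_solution_iff_not_confusable:
  "is_solution n E q enc \<longleftrightarrow>
     (\<forall>x\<in>msgs n q. \<forall>y\<in>msgs n q. enc x = enc y \<longrightarrow> \<not> confusable n E x y)"
  unfolding is_solution_def confusable_def by blast

lemma confusion_freeD:
  assumes "confusion_free n E q S" "x \<in> S" "y \<in> S" "i < n" "\<And>j. j < n \<Longrightarrow> E i j \<Longrightarrow> x j = y j"
  shows "x i = y i"
  using assms unfolding confusion_free_def confusable_def by blast

lemma finite_confusion_free: "confusion_free n E q S \<Longrightarrow> finite S"
  unfolding confusion_free_def using finite_subset finite_msgs by blast

lemma card_le_card_image_mult:
  assumes "finite S" and fibre: "\<And>a. a \<in> f ` S \<Longrightarrow> real (card {x \<in> S. f x = a}) \<le> B"
  shows "real (card S) \<le> real (card (f ` S)) * B"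
proof -
  have "S = (\<Union>a\<in>f ` S. {x \<in> S. f x = a})" by auto
  then have "card S \<le> (\<Sum>a\<in>f ` S. card {x \<in> S. f x = a})"
    using card_UN_le[of "f ` S" "\<lambda>a. {x \<in> S. f x = a}"] \<open>finite S\<close> by simp
  then have "real (card S) \<le> (\<Sum>a\<in>f ` S. real (card {x \<in> S. f x = a}))"
    by (simp flip: of_nat_sum)
  also have "\<dots> \<le> (\<Sum>a\<in>f ` S. B)" by (intro sum_mono fibre)
  finally show ?thesis by simp
qed

lemma card_msgs_le_codewords_mult_bound:
  assumes sol: "is_solution n E q enc"
    and bound: "\<And>S. confusion_free n E q S \<Longrightarrow> real (card S) \<le> B"
  shows "real q ^ n \<le> real (card (enc ` msgs n q)) * B"
proof -
  have "real (card (msgs n q)) \<le> real (card (enc ` msgs n q)) * B"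
  proof (rule card_le_card_image_mult)
    fix c
    have "confusion_free n E q {x \<in> msgs n q. enc x = c}"
      using sol unfolding is_solution_iff_not_confusable confusion_free_def by auto
    then show "real (card {x \<in> msgs n q. enc x = c}) \<le> B" by (rule bound)
  qed simp
  then show ?thesis by simp
qed

lemma beta_t_ge_of_confusion_bound:
  assumes bound: "\<And>S. confusion_free n E (2 ^ t) S \<Longrightarrow> real (card S) \<le> B" and "0 < B"
  shows "real (n * t) - log 2 B \<le> real (beta_t n E t)"
proof (rule beta_t_lowerI)
  fix enc :: "(nat \<Rightarrow> nat) \<Rightarrow> nat"
  assume "is_solution n E (2 ^ t) enc"
  from card_msgs_le_codewords_mult_bound[OF this bound]
  moreover have "(2::real) powr real (n * t) = real (2 ^ t) ^ n"
    by (subst powr_realpow) (simp_all add: power_mult[symmetric] mult.commute)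
  ultimately have le: "2 powr real (n * t) \<le> real (card (enc ` msgs n (2 ^ t))) * B"
    by simp
  have "0 < real (card (enc ` msgs n (2 ^ t)))"
    by (simp add: card_codewords_pos)
  with le \<open>0 < B\<close> have "log 2 (2 powr real (n * t)) \<le> log 2 (card (enc ` msgs n (2 ^ t)) * B)"
    by (subst log_le_cancel_iff) auto
  with \<open>0 < B\<close> \<open>0 < real (card _)\<close>
  have "real (n * t) \<le> log 2 (card (enc ` msgs n (2 ^ t))) + log 2 B"
    by (simp add: log_mult split: if_splits)
  then show "real (n * t) - log 2 B \<le> log 2 (card (enc ` msgs n (2 ^ t)))" by simp
qed

section \<open>Disjoint copies\<close>

definition block :: "nat \<Rightarrow> nat \<Rightarrow> (nat \<Rightarrow> nat) \<Rightarrow> nat \<Rightarrow> nat" where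
  "block n j x = (\<lambda>r. if r < n then x (j * n + r) else 0)"

lemma block_index_less:
  fixes j t r n :: nat
  assumes "j < t" "r < n" shows "j * n + r < t * n"
proof -
  have "j * n + r < Suc j * n" using assms(2) by simp
  also have "\<dots> \<le> t * n" using assms(1) by (intro mult_le_mono1) simp
  finally show ?thesis .
qed

lemma block_index_decomp:
  fixes i t n :: nat
  assumes "i < t * n" shows "i div n < t" "i mod n < n" "i = i div n * n + i mod n"
proof -
  show "i div n < t" using assms by (simp add: less_mult_imp_div_less)
  have "0 < n" using assms by (cases n) simp_all
  then show "i mod n < n" by simp
qed simp

lemma block_in_msgs: "x \<in> msgs (t * n) q \<Longrightarrow> j < t \<Longrightarrow> block n j x \<in> msgs n q"
  unfolding msgs_def block_def using block_index_less by fastforce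

lemma copies_E_block_iff:
  assumes "j < t" "r < n"
  shows "copies_E t n E (j * n + r) v \<longleftrightarrow> v < t * n \<and> v div n = j \<and> E r (v mod n)"
  using assms block_index_less[OF assms] unfolding copies_E_def by auto

lemma copies_E_agree_iff:
  assumes "j < t" "r < n"
  shows "(\<forall>v<t * n. copies_E t n E (j * n + r) v \<longrightarrow> x v = y v)
     \<longleftrightarrow> (\<forall>s<n. E r s \<longrightarrow> block n j x s = block n j y s)"
proof
  assume agree: "\<forall>v<t * n. copies_E t n E (j * n + r) v \<longrightarrow> x v = y v"
  show "\<forall>s<n. E r s \<longrightarrow> block n j x s = block n j y s"
    using agree block_index_less[OF assms(1)] by (auto simp: block_def copies_E_block_iff[OF assms])
next
  assume agree: "\<forall>s<n. E r s \<longrightarrow> block n j x s = block n j y s"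
  show "\<forall>v<t * n. copies_E t n E (j * n + r) v \<longrightarrow> x v = y v"
  proof (intro allI impI)
    fix v assume "v < t * n" "copies_E t n E (j * n + r) v"
    then have "v div n = j" "E r (v mod n)" "v mod n < n" "v = v div n * n + v mod n"
      using block_index_decomp copies_E_block_iff[OF assms] by auto
    then show "x v = y v" using agree[rule_format, of "v mod n"] by (simp add: block_def)
  qed
qed

lemma confusable_copies_iff:
  "confusable (t * n) (copies_E t n E) x y \<longleftrightarrow> (\<exists>j<t. confusable n E (block n j x) (block n j y))"
proof
  assume "confusable (t * n) (copies_E t n E) x y"
  then obtain i where i: "i < t * n" "\<forall>v<t * n. copies_E t n E i v \<longrightarrow> x v = y v" "x i \<noteq> y i"
    unfolding confusable_def by blast
  define j r where "j = i div n" and "r = i mod n"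
  have jr: "j < t" "r < n" "i = j * n + r"
    using block_index_decomp[OF i(1)] unfolding j_def r_def by auto
  have "\<forall>s<n. E r s \<longrightarrow> block n j x s = block n j y s"
    using i(2) copies_E_agree_iff[OF jr(1,2)] jr(3) by simp
  moreover have "block n j x r \<noteq> block n j y r" using i(3) jr by (simp add: block_def)
  ultimately show "\<exists>j<t. confusable n E (block n j x) (block n j y)"
    using jr unfolding confusable_def by blast
next
  assume "\<exists>j<t. confusable n E (block n j x) (block n j y)"
  then obtain j r where jr: "j < t" "r < n" "\<forall>s<n. E r s \<longrightarrow> block n j x s = block n j y s"
    "block n j x r \<noteq> block n j y r"
    unfolding confusable_def by blast
  then show "confusable (t * n) (copies_E t n E) x y"
    unfolding confusable_def using block_index_less[OF jr(1,2)] copies_E_agree_iff[OF jr(1,2)]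
    by (intro exI[of _ "j * n + r"]) (simp add: block_def)
qed

lemma confusion_free_copies_iff:
  "confusion_free (t * n) (copies_E t n E) q S \<longleftrightarrow>
     S \<subseteq> msgs (t * n) q \<and> (\<forall>x\<in>S. \<forall>y\<in>S. \<forall>j<t. \<not> confusable n E (block n j x) (block n j y))"
  unfolding confusion_free_def confusable_copies_iff by simp

definition prefix_msg :: "nat \<Rightarrow> (nat \<Rightarrow> nat) \<Rightarrow> nat \<Rightarrow> nat" where
  "prefix_msg k x = (\<lambda>i. if i < k then x i else 0)"

lemma confusion_free_copies_prefix:
  assumes "confusion_free (Suc t * n) (copies_E (Suc t) n E) q S"
  shows "confusion_free (t * n) (copies_E t n E) q (prefix_msg (t * n) ` S)"
proof -
  have block_prefix: "block n j (prefix_msg (t * n) x) = block n j x" if "j < t" for j x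
    using block_index_less[OF that] by (auto simp: block_def prefix_msg_def)
  have "prefix_msg (t * n) ` S \<subseteq> msgs (t * n) q"
    using assms unfolding confusion_free_def by (auto simp: prefix_msg_def msgs_def)
  then show ?thesis
    using assms unfolding confusion_free_copies_iff by (auto simp: block_prefix)
qed

text \<open>Within a fibre of the prefix map only the last block varies, and the last blocks of a
  confusion-free set of \<open>Suc t\<close> copies form a confusion-free set of one copy.\<close>

lemma card_prefix_fibre_le:
  assumes cf: "confusion_free (Suc t * n) (copies_E (Suc t) n E) q S"
    and bound: "\<And>S. confusion_free n E q S \<Longrightarrow> real (card S) \<le> B"
  shows "real (card {x \<in> S. prefix_msg (t * n) x = a}) \<le> B"
proof -
  let ?T = "{x \<in> S. prefix_msg (t * n) x = a}"
  note cf' = cf[unfolded confusion_free_copies_iff]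
  have "inj_on (block n t) ?T"
  proof (rule inj_onI)
    fix x y assume x: "x \<in> ?T" and y: "y \<in> ?T" and eq: "block n t x = block n t y"
    show "x = y"
    proof (rule msgs_eqI)
      show "x \<in> msgs (Suc t * n) q" "y \<in> msgs (Suc t * n) q" using x y cf' by auto
      fix i assume i: "i < Suc t * n"
      show "x i = y i"
      proof (cases "i < t * n")
        case True
        from x y have "prefix_msg (t * n) x i = prefix_msg (t * n) y i" by simp
        with True show ?thesis by (simp add: prefix_msg_def)
      next
        case False
        then have "i - t * n < n" "i = t * n + (i - t * n)" using i by auto
        then show ?thesis using fun_cong[OF eq, of "i - t * n"] by (simp add: block_def)
      qed
    qed
  qed
  moreover have "block n t x \<in> msgs n q" if "x \<in> S" for x
    using cf' that by (intro block_in_msgs[of _ "Suc t"]) auto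
  then have "confusion_free n E q (block n t ` ?T)"
    unfolding confusion_free_def using cf' by auto
  ultimately show ?thesis using bound card_image by fastforce
qed

lemma card_confusion_free_copies_le:
  assumes bound: "\<And>S. confusion_free n E q S \<Longrightarrow> real (card S) \<le> B" and "0 \<le> B"
  shows "confusion_free (t * n) (copies_E t n E) q S \<Longrightarrow> real (card S) \<le> B ^ t"
proof (induction t arbitrary: S)
  case 0
  then have "card S \<le> card (msgs 0 q)"
    unfolding confusion_free_def by (intro card_mono) auto
  then show ?case by simp
next
  case (Suc t)
  have "real (card S) \<le> real (card (prefix_msg (t * n) ` S)) * B"
    using finite_confusion_free[OF Suc.prems] card_prefix_fibre_le[OF Suc.prems bound]
    by (rule card_le_card_image_mult)
  also have "\<dots> \<le> B ^ t * B"
    using Suc.IH[OF confusion_free_copies_prefix[OF Suc.prems]] \<open>0 \<le> B\<close> by (rule mult_right_mono)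
  finally show ?case by (simp add: mult.commute)
qed

definition block_product :: "nat \<Rightarrow> nat \<Rightarrow> nat \<Rightarrow> (nat \<Rightarrow> nat) set \<Rightarrow> (nat \<Rightarrow> nat) set" where
  "block_product t n q I = {x \<in> msgs (t * n) q. \<forall>j<t. block n j x \<in> I}"

lemma confusion_free_block_product:
  assumes "confusion_free n E q I"
  shows "confusion_free (t * n) (copies_E t n E) q (block_product t n q I)"
  unfolding confusion_free_copies_iff block_product_def
  using assms unfolding confusion_free_def by simp

lemma card_block_product:
  assumes "0 < n" "I \<subseteq> msgs n q"
  shows "card (block_product t n q I) = card I ^ t"
proof -
  have "bij_betw (\<lambda>x. restrict (\<lambda>j. block n j x) {..<t}) (block_product t n q I) (PiE {..<t} (\<lambda>_. I))"
  proof (rule bij_betw_byWitness[where f' = "\<lambda>f i. if i < t * n then f (i div n) (i mod n) else 0"])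
    show "\<forall>x\<in>block_product t n q I.
            (\<lambda>i. if i < t * n then restrict (\<lambda>j. block n j x) {..<t} (i div n) (i mod n) else 0) = x"
      using \<open>0 < n\<close>
      by (auto simp: block_product_def msgs_def block_def fun_eq_iff less_mult_imp_div_less)
    show "\<forall>f\<in>PiE {..<t} (\<lambda>_. I).
            restrict (\<lambda>j. block n j (\<lambda>i. if i < t * n then f (i div n) (i mod n) else 0)) {..<t} = f"
    proof
      fix f assume f: "f \<in> PiE {..<t} (\<lambda>_. I)"
      have "block n j (\<lambda>i. if i < t * n then f (i div n) (i mod n) else 0) = f j" if "j < t" for j
        using f that assms block_index_less[OF that]
        by (auto simp: block_def fun_eq_iff msgs_def PiE_iff subset_iff)
      then show "restrict (\<lambda>j. block n j (\<lambda>i. if i < t * n then f (i div n) (i mod n) else 0)) {..<t} = f"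
        using f by (auto simp: PiE_iff extensional_def)
    qed
    show "(\<lambda>x. restrict (\<lambda>j. block n j x) {..<t}) ` block_product t n q I \<subseteq> PiE {..<t} (\<lambda>_. I)"
      by (auto simp: block_product_def)
    show "(\<lambda>f i. if i < t * n then f (i div n) (i mod n) else 0) ` PiE {..<t} (\<lambda>_. I)
            \<subseteq> block_product t n q I"
    proof (rule image_subsetI)
      fix f assume f: "f \<in> PiE {..<t} (\<lambda>_. I)"
      let ?x = "\<lambda>i. if i < t * n then f (i div n) (i mod n) else 0"
      have "block n j ?x = f j" if "j < t" for j
        using f that assms block_index_less[OF that]
        by (auto simp: block_def fun_eq_iff msgs_def PiE_iff subset_iff)
      moreover have "?x \<in> msgs (t * n) q"
        using f assms by (auto simp: msgs_def PiE_iff subset_iff less_mult_imp_div_less)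
      ultimately show "?x \<in> block_product t n q I"
        using f by (auto simp: block_product_def PiE_iff)
    qed
  qed
  then show ?thesis by (simp add: bij_betw_same_card card_PiE)
qed

lemma beta_t_copies_le: "beta_t (m * n) (copies_E m n E) t \<le> m * beta_t n E t"
proof -
  obtain enc :: "(nat \<Rightarrow> nat) \<Rightarrow> nat" where sol: "is_solution n E (2 ^ t) enc"
    and card: "card (enc ` msgs n (2 ^ t)) \<le> 2 ^ beta_t n E t"
    using ex_solution_card_le_beta_t by blast
  define enc' where "enc' x = restrict (\<lambda>j. enc (block n j x)) {..<m}" for x
  have "is_solution (m * n) (copies_E m n E) (2 ^ t) enc'"
    unfolding is_solution_iff_not_confusable confusable_copies_iff
  proof (intro ballI impI notI)
    fix x y assume xy: "x \<in> msgs (m * n) (2 ^ t)" "y \<in> msgs (m * n) (2 ^ t)" "enc' x = enc' y"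
    assume "\<exists>j<m. confusable n E (block n j x) (block n j y)"
    then obtain j where "j < m" "confusable n E (block n j x) (block n j y)" by blast
    moreover have "enc (block n j x) = enc (block n j y)"
      using fun_cong[OF xy(3), of j] \<open>j < m\<close> by (simp add: enc'_def)
    ultimately show False
      using sol xy block_in_msgs unfolding is_solution_iff_not_confusable by blast
  qed
  moreover have "card (enc' ` msgs (m * n) (2 ^ t)) \<le> 2 ^ (m * beta_t n E t)"
  proof -
    have "enc' ` msgs (m * n) (2 ^ t) \<subseteq> PiE {..<m} (\<lambda>_. enc ` msgs n (2 ^ t))"
    proof (rule image_subsetI)
      fix x assume x: "x \<in> msgs (m * n) (2 ^ t)"
      have "enc (block n j x) \<in> enc ` msgs n (2 ^ t)" if "j < m" for j
        using block_in_msgs[OF x that] by simp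
      then show "enc' x \<in> PiE {..<m} (\<lambda>_. enc ` msgs n (2 ^ t))"
        by (simp add: enc'_def restrict_PiE_iff)
    qed
    then have "card (enc' ` msgs (m * n) (2 ^ t)) \<le> card (PiE {..<m} (\<lambda>_. enc ` msgs n (2 ^ t)))"
      by (rule card_mono[rotated]) (simp add: finite_PiE)
    also have "\<dots> = card (enc ` msgs n (2 ^ t)) ^ m" by (simp add: card_PiE)
    also have "\<dots> \<le> (2 ^ beta_t n E t) ^ m" using card by (rule power_mono) simp
    also have "\<dots> = 2 ^ (m * beta_t n E t)" by (simp add: power_mult[symmetric] ac_simps)
    finally show ?thesis .
  qed
  ultimately show ?thesis by (rule beta_t_le_of_solution)
qed

lemma copies_E_copies_E: "copies_E t (m * n) (copies_E m n E) = copies_E (t * m) n E"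
proof (intro ext)
  fix u v
  show "copies_E t (m * n) (copies_E m n E) u v = copies_E (t * m) n E u v"
  proof (cases "m * n = 0")
    case True then show ?thesis by (auto simp: copies_E_def)
  next
    case False
    have div: "w div (m * n) = w div n div m" for w
      using div_mult2_eq[of w n m] by (simp add: mult.commute)
    have mod_div: "w mod (m * n) div n = w div n mod m" for w
      using mod_mult2_eq[of w n m] False by (simp add: mult.commute)
    have mod_mod: "w mod (m * n) mod n = w mod n" for w
      by (simp add: mod_mod_cancel)
    have mod_less: "w mod (m * n) < m * n" for w
      using False by simp
    have div_mod_eq: "a div m = b div m \<and> a mod m = b mod m \<longleftrightarrow> a = b" for a b :: nat
      by (metis div_mult_mod_eq)
    show ?thesis
      unfolding copies_E_def div mod_div mod_mod using mod_less div_mod_eq by (auto simp: ac_simps)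
  qed
qed

lemma copies_E_one: "is_graph n E \<Longrightarrow> copies_E 1 n E = E"
  unfolding is_graph_def copies_E_def by (auto simp: fun_eq_iff)

lemma is_graph_copies_E: "is_graph n E \<Longrightarrow> is_graph (t * n) (copies_E t n E)"
  unfolding is_graph_def copies_E_def by fastforce

lemma beta_star_le_beta_1: "is_graph n E \<Longrightarrow> beta_star n E \<le> real (beta_1 n E)"
  using beta_star_le_beta_1_copies[of 1 n E] copies_E_one by (simp add: copies_n_def)

lemma beta_star_copies_ge:
  assumes "\<And>k. L * real k \<le> real (beta_1 (k * n) (copies_E k n E))"
  shows "L * real m \<le> beta_star (m * n) (copies_E m n E)"
proof (rule beta_star_greatest)
  fix t :: nat assume "0 < t"
  have "L * real (t * m) \<le> real (beta_1 (copies_n t (m * n)) (copies_E t (m * n) (copies_E m n E)))"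
    using assms[of "t * m"] by (simp add: copies_n_def copies_E_copies_E mult.assoc)
  then show "L * real m \<le> real (beta_1 (copies_n t (m * n)) (copies_E t (m * n) (copies_E m n E))) / real t"
    using \<open>0 < t\<close> by (simp add: field_simps)
qed

definition independent_set :: "nat \<Rightarrow> (nat \<Rightarrow> nat \<Rightarrow> bool) \<Rightarrow> nat set \<Rightarrow> bool" where
  "independent_set n E S \<longleftrightarrow> S \<subseteq> {0..<n} \<and> (\<forall>i\<in>S. \<forall>j\<in>S. \<not> E i j)"

lemma alpha_eq_Max: "alpha n E = Max {card S | S. independent_set n E S}"
  unfolding alpha_def independent_set_def ..

lemma finite_independent_cards: "finite {card S | S. independent_set n E S}"
proof (rule finite_subset)
  show "{card S | S. independent_set n E S} \<subseteq> {..n}"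
  proof
    fix k assume "k \<in> {card S | S. independent_set n E S}"
    then obtain S where "k = card S" "S \<subseteq> {0..<n}"
      unfolding independent_set_def by blast
    then show "k \<in> {..n}" using card_mono[of "{0..<n}" S] by simp
  qed
qed simp

lemma card_le_alpha: "independent_set n E S \<Longrightarrow> card S \<le> alpha n E"
  unfolding alpha_eq_Max using finite_independent_cards by (auto intro: Max_ge)

lemma alpha_eqI:
  assumes "\<And>S. independent_set n E S \<Longrightarrow> card S \<le> a" "independent_set n E S\<^sub>0" "card S\<^sub>0 = a"
  shows "alpha n E = a"
  unfolding alpha_eq_Max using assms finite_independent_cards by (intro Max_eqI) auto

lemma ex_independent_card_alpha: "\<exists>S. independent_set n E S \<and> card S = alpha n E"
proof -
  have "independent_set n E {}" by (simp add: independent_set_def)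
  then have "alpha n E \<in> {card S | S. independent_set n E S}"
    unfolding alpha_eq_Max using finite_independent_cards by (intro Max_in) auto
  then show ?thesis by force
qed

lemma card_independent_set_copies_le:
  assumes S: "independent_set (t * n) (copies_E t n E) S"
  shows "card S \<le> t * alpha n E"
proof -
  let ?slice = "\<lambda>j. {r. r < n \<and> j * n + r \<in> S}"
  have "card S \<le> card (Sigma {..<t} ?slice)"
  proof (rule card_inj_on_le[where f = "\<lambda>u. (u div n, u mod n)"])
    show "inj_on (\<lambda>u. (u div n, u mod n)) S"
    proof (rule inj_onI)
      fix u v assume "(u div n, u mod n) = (v div n, v mod n)"
      then show "u = v" by (metis div_mult_mod_eq prod.inject)
    qed
    show "(\<lambda>u. (u div n, u mod n)) ` S \<subseteq> Sigma {..<t} ?slice"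
    proof (rule image_subsetI)
      fix u assume "u \<in> S"
      then have "u < t * n" using S unfolding independent_set_def by auto
      with \<open>u \<in> S\<close> show "(u div n, u mod n) \<in> Sigma {..<t} ?slice"
        using block_index_decomp(1,2)[of u t n] by simp
    qed
    show "finite (Sigma {..<t} ?slice)" by (rule finite_SigmaI) auto
  qed
  also have "\<dots> = (\<Sum>j<t. card (?slice j))" by (simp add: card_SigmaI)
  also have "\<dots> \<le> (\<Sum>j<t. alpha n E)"
  proof (intro sum_mono card_le_alpha)
    fix j assume "j \<in> {..<t}"
    have "\<not> E r s" if "r \<in> ?slice j" "s \<in> ?slice j" for r s
    proof
      assume "E r s"
      with that \<open>j \<in> {..<t}\<close> have "copies_E t n E (j * n + r) (j * n + s)"
        using block_index_less[of j t s n] by (simp add: copies_E_block_iff)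
      with that S show False unfolding independent_set_def by blast
    qed
    then show "independent_set n E (?slice j)" unfolding independent_set_def by auto
  qed
  finally show ?thesis by simp
qed

lemma independent_set_copies:
  assumes S: "independent_set n E S"
  shows "independent_set (t * n) (copies_E t n E) ((\<lambda>(j, r). j * n + r) ` ({..<t} \<times> S))"
    and "card ((\<lambda>(j, r). j * n + r) ` ({..<t} \<times> S)) = t * card S"
proof -
  have "\<not> copies_E t n E (j * n + r) (j' * n + s)"
    if "j < t" "j' < t" "r \<in> S" "s \<in> S" for j j' r s
  proof -
    have "r < n" "s < n" "\<not> E r s" using S that(3,4) unfolding independent_set_def by auto
    then show ?thesis using that(1) by (simp add: copies_E_block_iff)
  qed
  then show "independent_set (t * n) (copies_E t n E) ((\<lambda>(j, r). j * n + r) ` ({..<t} \<times> S))"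
    using S block_index_less unfolding independent_set_def by auto
  have "inj_on (\<lambda>(j, r). j * n + r) ({..<t} \<times> S)"
    using S unfolding independent_set_def
    by (intro inj_on_inverseI[where g = "\<lambda>u. (u div n, u mod n)"]) auto
  then show "card ((\<lambda>(j, r). j * n + r) ` ({..<t} \<times> S)) = t * card S"
    by (simp add: card_image card_cartesian_product)
qed

lemma alpha_copies_E: "alpha (t * n) (copies_E t n E) = t * alpha n E"
proof -
  obtain S where "independent_set n E S" "card S = alpha n E"
    using ex_independent_card_alpha by blast
  with independent_set_copies[of n E S t] show ?thesis
    by (intro alpha_eqI[OF card_independent_set_copies_le]) auto
qed

section \<open>Codes from random translates\<close>

definition xor_msg :: "(nat \<Rightarrow> nat) \<Rightarrow> (nat \<Rightarrow> nat) \<Rightarrow> nat \<Rightarrow> nat" where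
  "xor_msg x y = (\<lambda>i. (x i + y i) mod 2)"

lemma binary_msgs_less_2: "x \<in> msgs n 2 \<Longrightarrow> x i < 2"
  unfolding msgs_def by (cases "i < n") auto

lemma xor_msg_in_msgs: "x \<in> msgs n 2 \<Longrightarrow> y \<in> msgs n 2 \<Longrightarrow> xor_msg x y \<in> msgs n 2"
  unfolding msgs_def xor_msg_def by auto

lemma xor_msg_xor_msg: "y \<in> msgs n 2 \<Longrightarrow> xor_msg x (xor_msg x y) = y"
proof
  fix i assume "y \<in> msgs n 2"
  have "(a + (a + b) mod 2) mod 2 = b mod 2" for a b :: nat by presburger
  then show "xor_msg x (xor_msg x y) i = y i"
    unfolding xor_msg_def using binary_msgs_less_2[OF \<open>y \<in> msgs n 2\<close>, of i] by simp
qed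

lemma xor_msg_cancel: "x \<in> msgs n 2 \<Longrightarrow> y \<in> msgs n 2 \<Longrightarrow> xor_msg x z i = xor_msg y z i \<Longrightarrow> x i = y i"
  using binary_msgs_less_2[of x n i] binary_msgs_less_2[of y n i]
  unfolding xor_msg_def by presburger

text \<open>The union bound: a uniformly random tuple of \<open>N\<close> translates misses the translates of
  a fixed word into \<open>I\<close> with probability \<open>(1 - |I|/2^n)^N\<close>.\<close>

lemma ex_covering_translates:
  fixes N :: nat
  assumes I: "I \<subseteq> msgs n 2"
    and count: "2 ^ n * (2 ^ n - card I) ^ N < (2 ^ n) ^ N"
  shows "\<exists>\<tau>. \<forall>x\<in>msgs n 2. \<exists>i<N. xor_msg x (\<tau> i) \<in> I"
proof -
  let ?M = "msgs n 2"
  define missing where "missing x = PiE {..<N} (\<lambda>_. {y \<in> ?M. xor_msg x y \<notin> I})" for x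
  have card_hit: "card {y \<in> ?M. xor_msg x y \<in> I} = card I" if "x \<in> ?M" for x
  proof (rule bij_betw_same_card[OF bij_betw_byWitness[where f' = "xor_msg x"]])
    show "\<forall>y\<in>{y \<in> ?M. xor_msg x y \<in> I}. xor_msg x (xor_msg x y) = y"
      using xor_msg_xor_msg by blast
    show "\<forall>z\<in>I. xor_msg x (xor_msg x z) = z"
      using I xor_msg_xor_msg by blast
    show "xor_msg x ` {y \<in> ?M. xor_msg x y \<in> I} \<subseteq> I" by auto
    show "xor_msg x ` I \<subseteq> {y \<in> ?M. xor_msg x y \<in> I}"
      using I that xor_msg_xor_msg xor_msg_in_msgs by fastforce
  qed
  have card_missing: "card (missing x) = (2 ^ n - card I) ^ N" if "x \<in> ?M" for x
  proof -
    have "{y \<in> ?M. xor_msg x y \<notin> I} = ?M - {y \<in> ?M. xor_msg x y \<in> I}" by auto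
    then have "card {y \<in> ?M. xor_msg x y \<notin> I} = 2 ^ n - card I"
      using card_hit[OF that] by (simp add: card_Diff_subset)
    then show ?thesis by (simp add: missing_def card_PiE)
  qed
  have "card (\<Union>x\<in>?M. missing x) \<le> (\<Sum>x\<in>?M. card (missing x))"
    by (rule card_UN_le) simp
  also have "\<dots> = 2 ^ n * (2 ^ n - card I) ^ N" by (simp add: card_missing)
  also have "\<dots> < card (PiE {..<N} (\<lambda>_. ?M))" using count by (simp add: card_PiE)
  finally have less: "card (\<Union>x\<in>?M. missing x) < card (PiE {..<N} (\<lambda>_. ?M))" .
  have "\<not> PiE {..<N} (\<lambda>_. ?M) \<subseteq> (\<Union>x\<in>?M. missing x)"
  proof
    assume "PiE {..<N} (\<lambda>_. ?M) \<subseteq> (\<Union>x\<in>?M. missing x)"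
    then have "card (PiE {..<N} (\<lambda>_. ?M)) \<le> card (\<Union>x\<in>?M. missing x)"
      by (rule card_mono[rotated]) (simp add: missing_def finite_PiE)
    with less show False by simp
  qed
  then obtain \<tau> where \<tau>: "\<tau> \<in> PiE {..<N} (\<lambda>_. ?M)" "\<forall>x\<in>?M. \<tau> \<notin> missing x" by blast
  have "\<exists>i<N. xor_msg x (\<tau> i) \<in> I" if "x \<in> ?M" for x
    using \<tau> that by (auto simp: missing_def PiE_iff)
  then show ?thesis by blast
qed

text \<open>Send the index of a translate that moves the word into the confusion-free set \<open>I\<close>:
  each receiver decodes within \<open>I\<close> and undoes the translation.\<close>

lemma beta_1_le_of_covering:
  fixes \<tau> :: "nat \<Rightarrow> nat \<Rightarrow> nat"
  assumes I: "confusion_free n E 2 I" and cover: "\<forall>x\<in>msgs n 2. \<exists>i<N. xor_msg x (\<tau> i) \<in> I"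
    and "N \<le> 2 ^ K"
  shows "beta_1 n E \<le> K"
proof -
  define enc where "enc x = (LEAST i. xor_msg x (\<tau> i) \<in> I)" for x
  have enc: "xor_msg x (\<tau> (enc x)) \<in> I \<and> enc x < N" if x: "x \<in> msgs n 2" for x
  proof -
    obtain i where i: "i < N" "xor_msg x (\<tau> i) \<in> I" using cover x by blast
    have "xor_msg x (\<tau> (enc x)) \<in> I"
      unfolding enc_def by (rule LeastI[where P = "\<lambda>i. xor_msg x (\<tau> i) \<in> I", OF i(2)])
    moreover have "enc x \<le> i"
      unfolding enc_def by (rule Least_le[where P = "\<lambda>i. xor_msg x (\<tau> i) \<in> I", OF i(2)])
    ultimately show ?thesis using i(1) by simp
  qed
  have "is_solution n E (2 ^ 1) enc"
    unfolding is_solution_iff_not_confusable power_one_right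
  proof (intro ballI impI notI)
    fix x y assume x: "x \<in> msgs n 2" and y: "y \<in> msgs n 2" and eq: "enc x = enc y"
      and "confusable n E x y"
    then obtain i where i: "i < n" "\<forall>j<n. E i j \<longrightarrow> x j = y j" "x i \<noteq> y i"
      unfolding confusable_def by blast
    let ?z = "\<tau> (enc x)"
    have xz: "xor_msg x ?z \<in> I" and yz: "xor_msg y ?z \<in> I"
      using enc[OF x] enc[OF y] eq by simp_all
    have "xor_msg x ?z i = xor_msg y ?z i"
    proof (rule confusion_freeD[OF I xz yz i(1)])
      fix j assume "j < n" "E i j"
      then show "xor_msg x ?z j = xor_msg y ?z j" using i(2) by (simp add: xor_msg_def)
    qed
    then show False using xor_msg_cancel[OF x y] i(3) by blast
  qed
  moreover have "card (enc ` msgs n (2 ^ 1)) \<le> 2 ^ K"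
  proof -
    have "enc ` msgs n (2 ^ 1) \<subseteq> {..<N}" using enc by (intro image_subsetI) simp
    then have "card (enc ` msgs n (2 ^ 1)) \<le> N" using card_mono[OF finite_lessThan] by fastforce
    then show ?thesis using \<open>N \<le> 2 ^ K\<close> by linarith
  qed
  ultimately show ?thesis by (rule beta_t_le_of_solution)
qed

lemma union_bound_condition:
  fixes g a N :: nat
  assumes "0 < a" "a \<le> g" and N: "real g / real a * ln (real g) < real N"
  shows "g * (g - a) ^ N < g ^ N"
proof -
  have g: "0 < real g" using assms by simp
  define p where "p = real a / real g"
  have p: "0 < p" "p \<le> 1" using assms g by (simp_all add: p_def)
  have "(1 - p) ^ N \<le> exp (- p) ^ N"
    using p exp_ge_add_one_self[of "- p"] by (intro power_mono) simp_all
  also have "\<dots> = exp (- (p * real N))" by (simp flip: exp_of_nat_mult)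
  also have "\<dots> < exp (- ln (real g))"
    using N assms g by (simp add: p_def field_simps)
  also have "\<dots> = 1 / real g" using g by (simp add: exp_minus inverse_eq_divide)
  finally have small: "(1 - p) ^ N < 1 / real g" .
  have "real (g - a) = real g * (1 - p)"
    using assms g by (simp add: of_nat_diff p_def field_simps)
  then have "real (g * (g - a) ^ N) = real g * (real g * (1 - p)) ^ N" by simp
  also have "\<dots> = real g * real g ^ N * (1 - p) ^ N" by (simp add: power_mult_distrib)
  also have "\<dots> < real g * real g ^ N * (1 / real g)"
    using small g by (intro mult_strict_left_mono) simp_all
  also have "\<dots> = real (g ^ N)" using g by simp
  finally show ?thesis by (simp only: of_nat_less_iff)
qed

lemma le_two_pow_ceiling_log:
  assumes "0 < N" shows "N \<le> 2 ^ nat \<lceil>log 2 (real N)\<rceil>"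
proof -
  have "real N = 2 powr log 2 (real N)" using assms by simp
  also have "\<dots> \<le> 2 powr real (nat \<lceil>log 2 (real N)\<rceil>)"
    by (intro powr_mono real_nat_ceiling_ge) simp
  also have "\<dots> = real (2 ^ nat \<lceil>log 2 (real N)\<rceil>)" by (simp add: powr_realpow)
  finally show ?thesis by (simp only: of_nat_le_iff)
qed

lemma beta_1_le_of_confusion_free:
  assumes I: "confusion_free n E 2 I" and "I \<noteq> {}"
  shows "real (beta_1 n E) \<le> real n - log 2 (card I) + log 2 (real n * ln 2 + 1) + 1"
proof -
  let ?g = "2 ^ n :: nat" and ?a = "card I"
  have sub: "I \<subseteq> msgs n 2" using I unfolding confusion_free_def by blast
  have a: "0 < ?a" using \<open>I \<noteq> {}\<close> finite_confusion_free[OF I] by (simp add: card_gt_0_iff)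
  have ag: "?a \<le> ?g" using card_mono[OF finite_msgs sub] by simp
  define X where "X = real ?g / real ?a"
  have X: "1 \<le> X" using a ag by (simp add: X_def)
  have ln_g: "ln ((2::real) ^ n) = real n * ln 2" by (simp add: ln_realpow)
  define N where "N = nat \<lfloor>X * (real n * ln 2)\<rfloor> + 1"
  have nonneg: "0 \<le> X * (real n * ln 2)" using X by simp
  have N_gt: "X * (real n * ln 2) < real N" and N_le: "real N \<le> X * (real n * ln 2) + 1"
    using nonneg unfolding N_def by linarith+
  have "?g * (?g - ?a) ^ N < ?g ^ N"
    using a ag N_gt by (intro union_bound_condition) (simp_all add: X_def ln_g)
  then obtain \<tau> where "\<forall>x\<in>msgs n 2. \<exists>i<N. xor_msg x (\<tau> i) \<in> I"
    using ex_covering_translates[OF sub] by blast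
  then have "beta_1 n E \<le> nat \<lceil>log 2 (real N)\<rceil>"
    using I le_two_pow_ceiling_log[of N] by (intro beta_1_le_of_covering) (simp_all add: N_def)
  moreover have "0 \<le> log 2 (real N)" by (simp add: N_def)
  ultimately have "real (beta_1 n E) \<le> log 2 (real N) + 1"
    using ceiling_correct[of "log 2 (real N)"] by linarith
  also have "log 2 (real N) \<le> log 2 (X * (real n * ln 2 + 1))"
  proof (subst log_le_cancel_iff)
    show "real N \<le> X * (real n * ln 2 + 1)" using N_le X by (simp add: algebra_simps)
    show "0 < X * (real n * ln 2 + 1)" using X by (simp add: add_nonneg_pos)
  qed (simp_all add: N_def)
  also have "\<dots> = log 2 X + log 2 (real n * ln 2 + 1)"
    using X by (intro log_mult_pos) (simp_all add: add_nonneg_pos)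
  also have "log 2 X = real n - log 2 ?a"
    using a by (simp add: X_def log_divide log_nat_power)
  finally show ?thesis by simp
qed

section \<open>The 5-cycle\<close>

definition cycle5 :: "nat \<Rightarrow> nat \<Rightarrow> bool" where
  "cycle5 i j \<longleftrightarrow> i < 5 \<and> j < 5 \<and> (j = (i + 1) mod 5 \<or> j = (i + 4) mod 5)"

lemma less_5_cases: "(i::nat) < 5 \<Longrightarrow> i = 0 \<or> i = 1 \<or> i = 2 \<or> i = 3 \<or> i = 4"
  by auto

lemma is_graph_cycle5: "is_graph 5 cycle5"
  unfolding is_graph_def
proof (intro allI impI)
  fix i j assume "cycle5 i j"
  then have "i < 5" "j = (i + 1) mod 5 \<or> j = (i + 4) mod 5" unfolding cycle5_def by auto
  with less_5_cases[OF this(1)] show "i < 5 \<and> j < 5 \<and> i \<noteq> j \<and> cycle5 j i"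
    unfolding cycle5_def by auto
qed

lemma confusion_free_cycle5D:
  assumes "confusion_free 5 cycle5 q S" "x \<in> S" "y \<in> S" "i < 5"
    and "(i + 1) mod 5 = j" "(i + 4) mod 5 = k" "x j = y j" "x k = y k"
  shows "x i = y i"
proof (rule confusion_freeD[OF assms(1-4)])
  fix l assume "l < 5" "cycle5 i l"
  then have "l = j \<or> l = k" using assms(5,6) unfolding cycle5_def by blast
  then show "x l = y l" using assms(7,8) by blast
qed
lemma card_image_le_if_determined:
  assumes "finite S" and det: "\<And>x y. x \<in> S \<Longrightarrow> y \<in> S \<Longrightarrow> g x = g y \<Longrightarrow> f x = f y"
  shows "card (f ` S) \<le> card (g ` S)"
proof -
  have "f ` S = (\<lambda>z. f (inv_into S g z)) ` (g ` S)"
  proof (intro equalityI image_subsetI)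
    fix x assume x: "x \<in> S"
    have "f x = f (inv_into S g (g x))"
      using x by (intro det) (simp_all add: inv_into_into f_inv_into_f)
    then show "f x \<in> (\<lambda>z. f (inv_into S g z)) ` (g ` S)" using x by blast
  next
    fix z assume "z \<in> g ` S"
    then show "f (inv_into S g z) \<in> f ` S" by (simp add: inv_into_into)
  qed
  then show ?thesis using card_image_le[OF finite_imageI[OF \<open>finite S\<close>]] by metis
qed

lemma sum_card_image_fibres:
  assumes "finite S"
  shows "(\<Sum>k\<in>K ` S. card (h ` {x \<in> S. K x = k})) = card ((\<lambda>x. (K x, h x)) ` S)"
proof -
  have "(\<lambda>x. (K x, h x)) ` S = Sigma (K ` S) (\<lambda>k. h ` {x \<in> S. K x = k})"
  proof (intro equalityI subsetI)
    fix p assume "p \<in> Sigma (K ` S) (\<lambda>k. h ` {x \<in> S. K x = k})"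
    then obtain x where "x \<in> S" "p = (K x, h x)" by auto
    then show "p \<in> (\<lambda>x. (K x, h x)) ` S" by blast
  qed auto
  then show ?thesis using assms by (simp add: card_SigmaI)
qed

lemma le_sqrt_mult_mean:
  fixes c q a b :: real
  assumes "0 \<le> c" "c \<le> q" "c \<le> a * b" "0 \<le> a" "0 \<le> b"
  shows "c \<le> sqrt q * ((a + b) / 2)"
proof -
  have "c = sqrt (c * c)" using assms(1) by simp
  also have "\<dots> \<le> sqrt (q * (a * b))" using assms by (intro real_sqrt_le_mono mult_mono) auto
  also have "\<dots> = sqrt q * sqrt (a * b)" by (simp add: real_sqrt_mult)
  also have "\<dots> \<le> sqrt q * ((a + b) / 2)"
    using assms by (intro mult_left_mono arith_geo_mean_sqrt) auto
  finally show ?thesis .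
qed

lemma confusion_free_cycle5_eqI:
  assumes cf: "confusion_free 5 cycle5 q S" and xy: "x \<in> S" "y \<in> S"
    and ends: "x 0 = y 0" "x 4 = y 4" and middle: "x 2 = y 2 \<or> x 1 = y 1 \<and> x 3 = y 3"
  shows "x = y"
proof -
  note det = confusion_free_cycle5D[OF cf xy]
  from middle have "x 1 = y 1 \<and> x 2 = y 2 \<and> x 3 = y 3"
  proof
    assume x2: "x 2 = y 2"
    have "x 1 = y 1" by (rule det[OF _ _ _ x2 ends(1)]) simp_all
    moreover have "x 3 = y 3" by (rule det[OF _ _ _ ends(2) x2]) simp_all
    ultimately show ?thesis using x2 by blast
  next
    assume "x 1 = y 1 \<and> x 3 = y 3"
    then have x1: "x 1 = y 1" and x3: "x 3 = y 3" by blast+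
    have "x 2 = y 2" by (rule det[OF _ _ _ x3 x1]) simp_all
    with x1 x3 show ?thesis by blast
  qed
  show "x = y"
  proof (rule msgs_eqI)
    show "x \<in> msgs 5 q" "y \<in> msgs 5 q" using cf xy unfolding confusion_free_def by auto
    fix i :: nat assume "i < 5"
    then have "i = 0 \<or> i = 1 \<or> i = 2 \<or> i = 3 \<or> i = 4" by (rule less_5_cases)
    then show "x i = y i" using ends \<open>x 1 = y 1 \<and> x 2 = y 2 \<and> x 3 = y 3\<close> by (elim disjE) simp_all
  qed
qed

text \<open>On a set of words agreeing at positions 0 and 4, a word is determined by its entry at
  position 2 and also by its entries at positions 1 and 3; this bounds the set by the geometric
  mean of the two counts.\<close>

lemma card_cycle5_fibre_le:
  assumes cf: "confusion_free 5 cycle5 q S" and "F \<subseteq> S"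
    and ends: "\<And>x y. x \<in> F \<Longrightarrow> y \<in> F \<Longrightarrow> x 0 = y 0 \<and> x 4 = y 4"
  shows "real (card F) \<le> sqrt q * ((real (card ((\<lambda>x. x 1) ` F)) + real (card ((\<lambda>x. x 3) ` F))) / 2)"
proof (rule le_sqrt_mult_mean)
  have F: "finite F" using finite_confusion_free[OF cf] \<open>F \<subseteq> S\<close> by (rule finite_subset[rotated])
  have "inj_on (\<lambda>x. x 2) F"
    using confusion_free_cycle5_eqI[OF cf] ends \<open>F \<subseteq> S\<close> by (intro inj_onI) blast
  moreover have "(\<lambda>x. x 2) ` F \<subseteq> {..<q}"
    using cf \<open>F \<subseteq> S\<close> unfolding confusion_free_def msgs_def by auto
  ultimately show "real (card F) \<le> real q"
    using card_inj_on_le[of _ F "{..<q}"] by simp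
  have "inj_on (\<lambda>x. (x 1, x 3)) F"
    using confusion_free_cycle5_eqI[OF cf] ends \<open>F \<subseteq> S\<close> by (intro inj_onI) blast
  moreover have "(\<lambda>x. (x 1, x 3)) ` F \<subseteq> (\<lambda>x. x 1) ` F \<times> (\<lambda>x. x 3) ` F" by auto
  ultimately have "card F \<le> card ((\<lambda>x. x 1) ` F \<times> (\<lambda>x. x 3) ` F)"
    by (rule card_inj_on_le) (simp add: F)
  then show "real (card F) \<le> real (card ((\<lambda>x. x 1) ` F)) * real (card ((\<lambda>x. x 3) ` F))"
    by (simp add: card_cartesian_product flip: of_nat_mult)
qed auto

lemma card_confusion_free_cycle5_le:
  assumes cf: "confusion_free 5 cycle5 q S"
  shows "real (card S) \<le> real q ^ 2 * sqrt (real q)"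
proof -
  have fin: "finite S" using cf by (rule finite_confusion_free)
  have val: "x i < q" if "x \<in> S" "i < 5" for x i
    using cf that unfolding confusion_free_def msgs_def by blast
  note det = confusion_free_cycle5D[OF cf]
  have det0: "x 0 = y 0" if "x \<in> S" "y \<in> S" "x 1 = y 1" "x 4 = y 4" for x y
    by (rule det[OF that(1,2) _ _ _ that(3,4)]) simp_all
  have det4: "x 4 = y 4" if "x \<in> S" "y \<in> S" "x 0 = y 0" "x 3 = y 3" for x y
    by (rule det[OF that(1,2) _ _ _ that(3,4)]) simp_all
  define K where "K x = (x 0, x 4)" for x :: "nat \<Rightarrow> nat"
  define F where "F k = {x \<in> S. K x = k}" for k
  define a where "a k = card ((\<lambda>x. x 1) ` F k)" for k
  define b where "b k = card ((\<lambda>x. x 3) ` F k)" for k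
  have fibre: "real (card (F k)) \<le> sqrt q * ((real (a k) + real (b k)) / 2)" for k
    unfolding a_def b_def using cf by (rule card_cycle5_fibre_le) (auto simp: F_def K_def)
  have "(\<Sum>k\<in>K ` S. a k) = card ((\<lambda>x. (K x, x 1)) ` S)"
    unfolding a_def F_def by (rule sum_card_image_fibres[OF fin])
  also have "\<dots> \<le> card ((\<lambda>x. (x 1, x 4)) ` S)"
    using fin det0 by (intro card_image_le_if_determined) (auto simp: K_def)
  also have "\<dots> \<le> card ({..<q} \<times> {..<q})"
    using val by (intro card_mono) auto
  finally have sum_a: "(\<Sum>k\<in>K ` S. a k) \<le> q ^ 2" by (simp add: power2_eq_square)
  have "(\<Sum>k\<in>K ` S. b k) = card ((\<lambda>x. (K x, x 3)) ` S)"
    unfolding b_def F_def by (rule sum_card_image_fibres[OF fin])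
  also have "\<dots> \<le> card ((\<lambda>x. (x 0, x 3)) ` S)"
    using fin det4 by (intro card_image_le_if_determined) (auto simp: K_def)
  also have "\<dots> \<le> card ({..<q} \<times> {..<q})"
    using val by (intro card_mono) auto
  finally have sum_b: "(\<Sum>k\<in>K ` S. b k) \<le> q ^ 2" by (simp add: power2_eq_square)
  have "card S = (\<Sum>k\<in>K ` S. card (F k))"
    using sum.image_gen[OF fin, of "\<lambda>_. 1 :: nat" K] unfolding F_def by (simp only: card_eq_sum)
  then have "real (card S) = (\<Sum>k\<in>K ` S. real (card (F k)))"
    by (simp flip: of_nat_sum)
  also have "\<dots> \<le> (\<Sum>k\<in>K ` S. sqrt q * ((real (a k) + real (b k)) / 2))"
    by (intro sum_mono fibre)
  also have "\<dots> = sqrt q / 2 * (\<Sum>k\<in>K ` S. real (a k) + real (b k))"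
    by (simp add: sum_distrib_left)
  also have "\<dots> = sqrt q * (real (\<Sum>k\<in>K ` S. a k) + real (\<Sum>k\<in>K ` S. b k)) / 2"
    by (simp add: sum.distrib)
  also have "\<dots> \<le> sqrt q * (real (q ^ 2) + real (q ^ 2)) / 2"
    using sum_a sum_b by (intro divide_right_mono mult_left_mono add_mono)
      (simp_all only: of_nat_le_iff real_sqrt_ge_zero of_nat_0_le_iff zero_le_numeral)
  finally show ?thesis by (simp add: mult.commute)
qed

lemma card_binary_confusion_free_cycle5_le: "confusion_free 5 cycle5 2 S \<Longrightarrow> card S \<le> 5"
proof -
  assume "confusion_free 5 cycle5 2 S"
  then have "real (card S) \<le> 4 * sqrt 2" using card_confusion_free_cycle5_le[of 2 S] by simp
  also have "\<dots> < 6" using real_less_lsqrt[of "3 / 2" 2] by (simp add: power2_eq_square)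
  finally show ?thesis by simp
qed

text \<open>Codeword \<open>i\<close> is the high bit of \<open>x\<^sub>i\<close> masked by the low bit of \<open>x\<^sub>i\<^sub>+\<^sub>1\<close>: receiver \<open>i\<close>
  reads its high bit from codeword \<open>i\<close> and its low bit from codeword \<open>i - 1\<close>.\<close>

lemma beta_t_cycle5_2_le: "beta_t 5 cycle5 2 \<le> 5"
proof -
  define enc where
    "enc x = (\<lambda>i. if i < 5 then (x i div 2 + x ((i + 1) mod 5) mod 2) mod 2 else 0)" for x :: "nat \<Rightarrow> nat"
  have cancel: "a mod 2 = b mod 2" if "(a + c) mod 2 = (b + c) mod 2" for a b c :: nat
    using that by presburger
  have cancel': "a mod 2 = b mod 2" if "(c + a) mod 2 = (c + b) mod 2" for a b c :: nat
    using that by presburger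
  have "is_solution 5 cycle5 (2 ^ 2) enc"
    unfolding is_solution_def
  proof (intro allI impI ballI)
    fix i x y assume i: "i < 5" and x: "x \<in> msgs 5 (2 ^ 2)" and y: "y \<in> msgs 5 (2 ^ 2)"
      and h: "enc x = enc y \<and> (\<forall>j<5. cycle5 i j \<longrightarrow> x j = y j)"
    define s p where "s = (i + 1) mod 5" and "p = (i + 4) mod 5"
    have "cycle5 i s" "cycle5 i p" using i by (simp_all add: cycle5_def s_def p_def)
    moreover have "s < 5" "p < 5" by (simp_all add: s_def p_def)
    ultimately have nbrs: "x s = y s" "x p = y p" using conjunct2[OF h] by blast+
    have p: "(p + 1) mod 5 = i" using less_5_cases[OF i] unfolding p_def by (elim disjE) simp_all
    have "(x i div 2 + y s mod 2) mod 2 = (y i div 2 + y s mod 2) mod 2"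
      using fun_cong[OF conjunct1[OF h], of i] i nbrs(1) by (simp add: enc_def s_def)
    then have "(x i div 2) mod 2 = (y i div 2) mod 2" by (rule cancel)
    moreover have "x i < 4" "y i < 4" using x y i by (simp_all add: msgs_def)
    ultimately have high: "x i div 2 = y i div 2" by simp
    have "(y p div 2 + x i mod 2) mod 2 = (y p div 2 + y i mod 2) mod 2"
      using fun_cong[OF conjunct1[OF h], of p] p \<open>p < 5\<close> nbrs(2) by (simp add: enc_def)
    then have "x i mod 2 mod 2 = y i mod 2 mod 2" by (rule cancel')
    then have low: "x i mod 2 = y i mod 2" by simp
    from high low show "x i = y i"
      using div_mult_mod_eq[of "x i" 2] div_mult_mod_eq[of "y i" 2] by linarith
  qed
  moreover have "card (enc ` msgs 5 (2 ^ 2)) \<le> 2 ^ 5"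
  proof -
    have "enc ` msgs 5 (2 ^ 2) \<subseteq> msgs 5 2" by (auto simp: enc_def msgs_def)
    then have "card (enc ` msgs 5 (2 ^ 2)) \<le> card (msgs 5 2)" by (rule card_mono[OF finite_msgs])
    then show ?thesis by simp
  qed
  ultimately show ?thesis by (rule beta_t_le_of_solution)
qed

lemma confusion_free_cycle5I:
  assumes "S \<subseteq> msgs 5 q"
    and "\<And>x y i. x \<in> S \<Longrightarrow> y \<in> S \<Longrightarrow> i < 5 \<Longrightarrow> x ((i + 1) mod 5) = y ((i + 1) mod 5)
           \<Longrightarrow> x ((i + 4) mod 5) = y ((i + 4) mod 5) \<Longrightarrow> x i = y i"
  shows "confusion_free 5 cycle5 q S"
  unfolding confusion_free_def confusable_def
proof (intro conjI ballI notI)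
  fix x y assume xy: "x \<in> S" "y \<in> S" and "\<exists>i<5. (\<forall>j<5. cycle5 i j \<longrightarrow> x j = y j) \<and> x i \<noteq> y i"
  then obtain i where i: "i < 5" "\<forall>j<5. cycle5 i j \<longrightarrow> x j = y j" "x i \<noteq> y i" by blast
  have "x ((i + 1) mod 5) = y ((i + 1) mod 5)" "x ((i + 4) mod 5) = y ((i + 4) mod 5)"
    by (rule i(2)[rule_format]; simp add: cycle5_def i(1))+
  with assms(2)[OF xy i(1)] i(3) show False by blast
qed (rule assms(1))

definition binary_word5 :: "nat list \<Rightarrow> nat \<Rightarrow> nat" where
  "binary_word5 bs = (\<lambda>i. if i < 5 then bs ! i else 0)"

text \<open>A confusion-free set of the maximum size allowed by \<open>card_binary_confusion_free_cycle5_le\<close>.\<close>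

definition cycle5_bit_strings :: "nat list set" where
  "cycle5_bit_strings = {[0,0,0,0,0], [1,1,0,0,0], [0,0,1,1,0], [1,1,0,1,1], [1,0,1,1,1]}"

definition cycle5_words :: "(nat \<Rightarrow> nat) set" where
  "cycle5_words = binary_word5 ` cycle5_bit_strings"

lemma binary_word5_in_msgs:
  assumes "length bs = 5" "set bs \<subseteq> {..<q}" shows "binary_word5 bs \<in> msgs 5 q"
proof -
  have "bs ! i < q" if "i < 5" for i
  proof -
    have "bs ! i \<in> set bs" using that assms(1) by simp
    then show ?thesis using assms(2) by auto
  qed
  then show ?thesis unfolding binary_word5_def msgs_def by auto
qed

lemma inj_on_binary_word5: "inj_on binary_word5 {bs. length bs = 5}"
proof (rule inj_onI)
  fix bs bs' assume len: "bs \<in> {bs. length bs = 5}" "bs' \<in> {bs. length bs = 5}"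
    and eq: "binary_word5 bs = binary_word5 bs'"
  show "bs = bs'"
  proof (rule nth_equalityI)
    show "length bs = length bs'" using len by simp
    fix i assume "i < length bs"
    then show "bs ! i = bs' ! i" using fun_cong[OF eq, of i] len by (simp add: binary_word5_def)
  qed
qed

lemma confusion_free_cycle5_words: "confusion_free 5 cycle5 2 cycle5_words"
proof (rule confusion_free_cycle5I)
  show "cycle5_words \<subseteq> msgs 5 2"
    unfolding cycle5_words_def cycle5_bit_strings_def by (intro image_subsetI binary_word5_in_msgs) auto
  have check: "\<forall>bs\<in>cycle5_bit_strings. \<forall>bs'\<in>cycle5_bit_strings. \<forall>i\<in>{0, 1, 2, 3, 4}.
      binary_word5 bs ((i + 1) mod 5) = binary_word5 bs' ((i + 1) mod 5) \<longrightarrow>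
      binary_word5 bs ((i + 4) mod 5) = binary_word5 bs' ((i + 4) mod 5) \<longrightarrow>
      binary_word5 bs i = binary_word5 bs' i"
    unfolding cycle5_bit_strings_def binary_word5_def by simp
  fix x y i assume "x \<in> cycle5_words" "y \<in> cycle5_words" "i < 5"
    "x ((i + 1) mod 5) = y ((i + 1) mod 5)" "x ((i + 4) mod 5) = y ((i + 4) mod 5)"
  moreover have "i \<in> {0, 1, 2, 3, 4}" using \<open>i < 5\<close> by auto
  ultimately show "x i = y i" using check unfolding cycle5_words_def by blast
qed

lemma card_cycle5_words: "card cycle5_words = 5"
proof -
  have "inj_on binary_word5 cycle5_bit_strings"
    by (rule inj_on_subset[OF inj_on_binary_word5]) (auto simp: cycle5_bit_strings_def)
  then show ?thesis unfolding cycle5_words_def by (simp add: card_image cycle5_bit_strings_def)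
qed

lemma alpha_cycle5: "alpha 5 cycle5 = 2"
proof (rule alpha_eqI)
  fix S assume S: "independent_set 5 cycle5 S"
  let ?rot = "\<lambda>i. (i + 1) mod 5"
  have sub: "S \<subseteq> {..<5}" "?rot ` S \<subseteq> {..<5}" using S unfolding independent_set_def by auto
  have "?rot i \<notin> S" if "i \<in> S" for i
  proof
    assume "?rot i \<in> S"
    moreover have "cycle5 i (?rot i)" using that sub(1) by (auto simp: cycle5_def)
    ultimately show False using S that unfolding independent_set_def by blast
  qed
  then have "S \<inter> ?rot ` S = {}" by blast
  then have "card S + card (?rot ` S) \<le> 5"
    using card_Un_disjoint[of S "?rot ` S"] card_mono[of "{..<5}" "S \<union> ?rot ` S"] sub
    by (simp add: finite_subset)
  moreover have "inj_on ?rot {..<5::nat}"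
  proof (rule inj_onI)
    fix i j :: nat assume "i \<in> {..<5}" "j \<in> {..<5}" "?rot i = ?rot j"
    with less_5_cases[of i] less_5_cases[of j] show "i = j" by auto
  qed
  then have "card (?rot ` S) = card S" using sub(1) by (intro card_image) (rule inj_on_subset)
  ultimately show "card S \<le> 2" by simp
next
  show "independent_set 5 cycle5 {0, 2}" by (simp add: independent_set_def cycle5_def)
qed simp

section \<open>Disjoint unions of 5-cycles\<close>

lemma beta_t_copies_cycle5_ge: "real (m * 5 * t) / 2 \<le> real (beta_t (m * 5) (copies_E m 5 cycle5) t)"
proof -
  define B where "B = real (2 ^ t) ^ 2 * sqrt (real (2 ^ t))"
  have "0 < B" by (simp add: B_def)
  have "log 2 B = log 2 (real (2 ^ t) ^ 2) + log 2 (sqrt (real (2 ^ t)))"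
    unfolding B_def by (rule log_mult_pos) simp_all
  also have "\<dots> = 5 * real t / 2"
    by (simp add: log_nat_power powr_half_sqrt[symmetric] log_powr)
  finally have log_B: "log 2 B = 5 * real t / 2" .
  have bound: "real (card S) \<le> B ^ m" if "confusion_free (m * 5) (copies_E m 5 cycle5) (2 ^ t) S" for S
  proof (rule card_confusion_free_copies_le[OF _ _ that])
    show "real (card S') \<le> B" if "confusion_free 5 cycle5 (2 ^ t) S'" for S'
      unfolding B_def using that by (rule card_confusion_free_cycle5_le)
  qed (use \<open>0 < B\<close> in simp)
  have "real (m * 5 * t) - log 2 (B ^ m) \<le> real (beta_t (m * 5) (copies_E m 5 cycle5) t)"
    by (rule beta_t_ge_of_confusion_bound[OF bound zero_less_power[OF \<open>0 < B\<close>]])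
  moreover have "log 2 (B ^ m) = real (m * 5 * t) / 2"
    using \<open>0 < B\<close> by (simp add: log_nat_power log_B)
  ultimately show ?thesis by simp
qed

lemma beta_copies_cycle5: "beta (m * 5) (copies_E m 5 cycle5) = real (m * 5) / 2"
proof (rule antisym)
  have "beta (m * 5) (copies_E m 5 cycle5) \<le> real (beta_t (m * 5) (copies_E m 5 cycle5) 2) / 2"
    using beta_le_beta_t[of 2] by simp
  also have "\<dots> \<le> real (m * beta_t 5 cycle5 2) / 2"
    using of_nat_mono[OF beta_t_copies_le[of m 5 cycle5 2]] by (rule divide_right_mono) simp
  also have "\<dots> \<le> real (m * 5) / 2"
    using beta_t_cycle5_2_le by (intro divide_right_mono of_nat_mono mult_le_mono2) simp_all
  finally show "beta (m * 5) (copies_E m 5 cycle5) \<le> real (m * 5) / 2" .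
next
  show "real (m * 5) / 2 \<le> beta (m * 5) (copies_E m 5 cycle5)"
  proof (rule beta_greatest)
    fix t :: nat assume "0 < t"
    then show "real (m * 5) / 2 \<le> real (beta_t (m * 5) (copies_E m 5 cycle5) t) / real t"
      using beta_t_copies_cycle5_ge[of m t] by (simp add: field_simps)
  qed
qed

lemma beta_1_copies_cycle5_ge: "real m * (5 - log 2 5) \<le> real (beta_1 (m * 5) (copies_E m 5 cycle5))"
proof -
  have "real (m * 5 * 1) - log 2 (5 ^ m) \<le> real (beta_1 (m * 5) (copies_E m 5 cycle5))"
  proof (rule beta_t_ge_of_confusion_bound)
    fix S assume "confusion_free (m * 5) (copies_E m 5 cycle5) (2 ^ 1) S"
    then show "real (card S) \<le> 5 ^ m"
      using card_binary_confusion_free_cycle5_le by (intro card_confusion_free_copies_le) simp_all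
  qed simp
  then show ?thesis by (simp add: log_nat_power algebra_simps)
qed

lemma beta_1_copies_cycle5_le:
  "real (beta_1 (m * 5) (copies_E m 5 cycle5))
     \<le> real m * (5 - log 2 5) + log 2 (real (m * 5) * ln 2 + 1) + 1"
proof -
  let ?I = "block_product m 5 2 cycle5_words"
  have sub: "cycle5_words \<subseteq> msgs 5 2"
    using confusion_free_cycle5_words unfolding confusion_free_def by blast
  have card: "card ?I = 5 ^ m" using card_block_product[OF _ sub] by (simp add: card_cycle5_words)
  then have "?I \<noteq> {}" by auto
  with confusion_free_block_product[OF confusion_free_cycle5_words]
  have "real (beta_1 (m * 5) (copies_E m 5 cycle5))
          \<le> real (m * 5) - log 2 (card ?I) + log 2 (real (m * 5) * ln 2 + 1) + 1"
    by (rule beta_1_le_of_confusion_free)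
  then show ?thesis by (simp add: card log_nat_power algebra_simps)
qed

lemma alpha_copies_cycle5: "alpha (m * 5) (copies_E m 5 cycle5) = 2 * m"
  by (simp add: alpha_copies_E alpha_cycle5)

lemma beta_star_copies_cycle5_ge: "real m * (5 - log 2 5) \<le> beta_star (m * 5) (copies_E m 5 cycle5)"
  using beta_star_copies_ge[of "5 - log 2 5" 5 cycle5 m] beta_1_copies_cycle5_ge
  by (simp add: mult.commute)

lemma copies_cycle5_rates:
  fixes m :: nat
  defines "n \<equiv> m * 5" and "G \<equiv> copies_E m 5 cycle5"
  assumes "0 < m"
  shows "1 - log 2 5 / 5 \<le> beta_star n G / real n"
    and "beta_star n G / real n \<le> real (beta_1 n G) / real n"
    and "real (beta_1 n G) / real n \<le> 1 - log 2 5 / 5 + (log 2 (real n * ln 2 + 1) + 1) / real n"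
proof -
  have n: "0 < real n" "real m * (5 - log 2 5) = (1 - log 2 5 / 5) * real n"
    using \<open>0 < m\<close> by (simp_all add: n_def algebra_simps)
  show "1 - log 2 5 / 5 \<le> beta_star n G / real n"
    using beta_star_copies_cycle5_ge[of m] n by (simp add: G_def n_def pos_le_divide_eq)
  show "beta_star n G / real n \<le> real (beta_1 n G) / real n"
    unfolding G_def n_def
    by (rule divide_right_mono[OF beta_star_le_beta_1[OF is_graph_copies_E[OF is_graph_cycle5]]]) simp
  have "real (beta_1 n G) \<le> (1 - log 2 5 / 5) * real n + (log 2 (real n * ln 2 + 1) + 1)"
    using beta_1_copies_cycle5_le[of m] n(2) by (simp add: G_def n_def)
  then have "real (beta_1 n G) / real n
      \<le> ((1 - log 2 5 / 5) * real n + (log 2 (real n * ln 2 + 1) + 1)) / real n"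
    using n(1) by (simp add: divide_right_mono)
  also have "\<dots> = 1 - log 2 5 / 5 + (log 2 (real n * ln 2 + 1) + 1) / real n"
    using n(1) by (simp add: add_divide_distrib)
  finally show "real (beta_1 n G) / real n \<le> 1 - log 2 5 / 5 + (log 2 (real n * ln 2 + 1) + 1) / real n" .
qed

lemma sandwich_tendsto_ratio:
  fixes a b e :: "nat \<Rightarrow> real"
  assumes "0 < c" "e \<longlonglongrightarrow> 0"
    and "\<And>k. c \<le> a k" "\<And>k. a k \<le> b k" "\<And>k. b k \<le> c + e k"
  shows "b \<longlonglongrightarrow> c" "(\<lambda>k. a k / b k) \<longlonglongrightarrow> 1"
proof -
  have upper: "(\<lambda>k. c + e k) \<longlonglongrightarrow> c" using tendsto_add[OF tendsto_const assms(2)] by simp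
  have "c \<le> b k" for k using assms(3,4) by (rule order_trans)
  then show b: "b \<longlonglongrightarrow> c"
    by (intro tendsto_sandwich[OF _ _ tendsto_const upper]) (simp_all add: assms(5))
  have "a \<longlonglongrightarrow> c"
    by (intro tendsto_sandwich[OF _ _ tendsto_const b]) (simp_all add: assms(3,4))
  from tendsto_divide[OF this b] show "(\<lambda>k. a k / b k) \<longlonglongrightarrow> 1"
    using \<open>0 < c\<close> by simp
qed

theorem corollary2p15:
  shows "\<exists>(N :: nat \<Rightarrow> nat) (G :: nat \<Rightarrow> nat \<Rightarrow> nat \<Rightarrow> bool).
     filterlim N at_top at_top \<and>
     (\<forall>k. is_graph (N k) (G k)
          \<and> beta (N k) (G k) = real (N k) / 2
          \<and> real (alpha (N k) (G k)) = 2 / 5 * real (N k)) \<and>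
     ((\<lambda>k. real (beta_1 (N k) (G k)) / real (N k)) \<longlonglongrightarrow> 1 - log 2 5 / 5) \<and>
     ((\<lambda>k. beta_star (N k) (G k) / real (beta_1 (N k) (G k))) \<longlonglongrightarrow> 1)"
proof -
  define N where "N k = Suc k * 5" for k
  define G where "G k = copies_E (Suc k) 5 cycle5" for k
  have "log 2 5 < log 2 (32 :: real)" by simp
  also have "log 2 (32 :: real) = 5" using log_nat_power[of 2 2 5] by simp
  finally have c: "0 < 1 - log 2 5 / 5" by simp
  have e: "(\<lambda>k. (log 2 (real (N k) * ln 2 + 1) + 1) / real (N k)) \<longlonglongrightarrow> 0"
    unfolding N_def by real_asymp
  note rates = sandwich_tendsto_ratio[OF c e copies_cycle5_rates[OF zero_less_Suc, folded N_def G_def]]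
  show ?thesis
  proof (intro exI[of _ N] exI[of _ G] conjI allI)
    show "filterlim N at_top at_top" unfolding N_def by (rule filterlim_subseq) (simp add: strict_mono_def)
    fix k
    show "is_graph (N k) (G k)" unfolding N_def G_def by (rule is_graph_copies_E[OF is_graph_cycle5])
    show "beta (N k) (G k) = real (N k) / 2" unfolding N_def G_def by (rule beta_copies_cycle5)
    show "real (alpha (N k) (G k)) = 2 / 5 * real (N k)" unfolding N_def G_def alpha_copies_cycle5 by simp
  next
    show "(\<lambda>k. real (beta_1 (N k) (G k)) / real (N k)) \<longlonglongrightarrow> 1 - log 2 5 / 5"
      by (rule rates(1))
    show "(\<lambda>k. beta_star (N k) (G k) / real (beta_1 (N k) (G k))) \<longlonglongrightarrow> 1"
      using rates(2) by (simp add: N_def G_def)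
  qed
qed
end
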